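(* Let $D$ be a BN distribution on $\{0,1\}^n$ with all conditional probabilities in $(0,1)$ and BN-induced basis $\{\phi_S\}$, let $f:\{0,1\}^n\to\{-1,1\}$, $\epsilon\in(0,1]$, $T\ge1$, and suppose there is $g=\sum_{S\in\mathcal{T}}g_S\phi_S$ with $|\mathcal{T}|=T$ and $\mathbb{E}_D[(f-g)^2]\le\epsilon$. Let $\mathcal{S}=\{S:|\hat f_S|\ge\sqrt{\epsilon/T}\}$ (so $|\mathcal{S}|\le T/\epsilon$). Let $\mathcal{S}^*\supseteq\mathcal{S}$ with $|\mathcal{S}^*|\le4T/\epsilon$, and let $\tilde f_S$ ($S\in\mathcal{S}^*$) be numbers with $|\tilde f_S-\hat f_S|\le\gamma$ where $\gamma\le\epsilon^2/(4T)$. Define $h_1=\sum_{S\in\mathcal{S}}\hat f_S\phi_S$, $h_2=\sum_{S\in\mathcal{S}}\tilde f_S\phi_S$, $h_3=\sum_{S\in\mathcal{S}^*}\tilde f_S\phi_S$. Then $\mathbb{E}_D[(f-h_1)^2]\le2\epsilon$, $\mathbb{E}_D[(f-h_2)^2]\le3\epsilon$, and $$P_D[f(X)\neq\operatorname{sign}(h_3(X))]\le\mathbb{E}_D[(f-h_3)^2]\le3\epsilon.$$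
   Context: For a BN with parent sets $\operatorname{pa}(v)$, $\mu_{v,x_{\operatorname{pa}(v)}}=P(X_v=1\mid X_{\operatorname{pa}(v)}=x_{\operatorname{pa}(v)})$, $\sigma_{v,x_{\operatorname{pa}(v)}}=\sqrt{\mu_{v,x_{\operatorname{pa}(v)}}(1-\mu_{v,x_{\operatorname{pa}(v)}})}$, the BN-induced basis is $\phi_v(x)=(x_v-\mu_{v,x_{\operatorname{pa}(v)}})/\sigma_{v,x_{\operatorname{pa}(v)}}$, $\phi_S=\prod_{v\in S}\phi_v$; $\hat f_S=\mathbb{E}_D[f(X)\phi_S(X)]$. *)

theory Defs
  imports Complex_Main
begin

text \<open>Bayesian network on variables 0..n-1. An assignment x in {0,1}^n is encoded as
 the set of indices v < n with x_v = 1 (so assignments are the elements of Pow {..<n}).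
 pa v is the parent set of v, mu v c = P(X_v = 1 | X_pa(v) = c) where the parent
 configuration c is encoded as the subset of pa v whose values are 1.\<close>

definition bn_dag :: "nat \<Rightarrow> (nat \<Rightarrow> nat set) \<Rightarrow> bool" where
  "bn_dag n pa \<longleftrightarrow> (\<forall>v<n. pa v \<subseteq> {..<n}) \<and> acyclic {(u, v). v < n \<and> u \<in> pa v}"

definition bn_pmf :: "nat \<Rightarrow> (nat \<Rightarrow> nat set) \<Rightarrow> (nat \<Rightarrow> nat set \<Rightarrow> real) \<Rightarrow> nat set \<Rightarrow> real" where
  "bn_pmf n pa mu x = (\<Prod>v<n. if v \<in> x then mu v (x \<inter> pa v) else 1 - mu v (x \<inter> pa v))"

definition bn_expect :: "nat \<Rightarrow> (nat \<Rightarrow> nat set) \<Rightarrow> (nat \<Rightarrow> nat set \<Rightarrow> real) \<Rightarrow> (nat set \<Rightarrow> real) \<Rightarrow> real" where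
  "bn_expect n pa mu F = (\<Sum>x\<in>Pow {..<n}. bn_pmf n pa mu x * F x)"

definition bn_prob :: "nat \<Rightarrow> (nat \<Rightarrow> nat set) \<Rightarrow> (nat \<Rightarrow> nat set \<Rightarrow> real) \<Rightarrow> (nat set \<Rightarrow> bool) \<Rightarrow> real" where
  "bn_prob n pa mu A = (\<Sum>x\<in>{x\<in>Pow {..<n}. A x}. bn_pmf n pa mu x)"

definition bn_phi1 :: "(nat \<Rightarrow> nat set) \<Rightarrow> (nat \<Rightarrow> nat set \<Rightarrow> real) \<Rightarrow> nat \<Rightarrow> nat set \<Rightarrow> real" where
  "bn_phi1 pa mu v x =
     ((if v \<in> x then 1 else 0) - mu v (x \<inter> pa v)) /
     sqrt (mu v (x \<inter> pa v) * (1 - mu v (x \<inter> pa v)))"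

definition bn_phi :: "(nat \<Rightarrow> nat set) \<Rightarrow> (nat \<Rightarrow> nat set \<Rightarrow> real) \<Rightarrow> nat set \<Rightarrow> nat set \<Rightarrow> real" where
  "bn_phi pa mu S x = (\<Prod>v\<in>S. bn_phi1 pa mu v x)"

definition bn_coeff :: "nat \<Rightarrow> (nat \<Rightarrow> nat set) \<Rightarrow> (nat \<Rightarrow> nat set \<Rightarrow> real) \<Rightarrow> (nat set \<Rightarrow> real) \<Rightarrow> nat set \<Rightarrow> real" where
  "bn_coeff n pa mu f S = bn_expect n pa mu (\<lambda>x. f x * bn_phi pa mu S x)"

end

theory Submission
  imports Defs
begin

text \<open>The BN-induced basis is orthonormal for the BN distribution: after conditioning on all
  variables but a sink \<open>v\<close> of the DAG, \<open>X v\<close> is Bernoulli with parameter \<open>\<mu>\<close>, and the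
  standardised \<open>\<phi> v\<close> has mean 0 and variance 1. Hence the squared error of \<open>\<Sum>S\<in>A. c S * \<phi> S\<close>
  is the residual \<open>E f\<^sup>2 - (\<Sum>S\<in>A. fhat S\<^sup>2)\<close> plus \<open>\<Sum>S\<in>A. (c S - fhat S)\<^sup>2\<close>, where
  \<open>fhat S = E (f * \<phi> S)\<close>. The approximation \<open>g\<close> bounds the residual on \<open>\<T>\<close> by \<open>\<epsilon>\<close>; the at
  most \<open>T\<close> coefficients of \<open>\<T>\<close> outside \<open>\<S>\<close> are below \<open>sqrt (\<epsilon> / T)\<close> and add at most \<open>\<epsilon>\<close>;
  the estimation errors add at most \<open>card \<S>\<^sup>* * \<gamma>\<^sup>2 \<le> \<epsilon>\<close>. Finally, a sign mistake of the
  \<open>\<plusminus>1\<close>-valued \<open>f\<close> costs at least 1 in squared error.\<close>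

lemma bn_dag_sink_exists:
  assumes dag: "bn_dag n pa" and W: "W \<subseteq> {..<n}" "W \<noteq> {}"
  obtains v where "v \<in> W" "\<And>u. u \<in> W \<Longrightarrow> v \<notin> pa u"
proof -
  let ?R = "{(u, v). v < n \<and> u \<in> pa v} \<inter> (W \<times> W)"
  have "finite ?R" using W by (meson finite_SigmaI finite_Int finite_lessThan finite_subset)
  moreover have "acyclic ?R" using dag unfolding bn_dag_def by (meson acyclic_subset inf_le1)
  ultimately have wf: "wf (?R\<inverse>)" by (rule finite_acyclic_wf_converse)
  obtain x where "x \<in> W" using W by blast
  from wfE_min[OF wf this] obtain z where z: "z \<in> W" "\<And>y. (y, z) \<in> ?R\<inverse> \<Longrightarrow> y \<notin> W"
    by blast
  show ?thesis
  proof (rule that[OF z(1)])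
    fix u assume u: "u \<in> W"
    show "z \<notin> pa u"
    proof
      assume "z \<in> pa u"
      then have "(u, z) \<in> ?R\<inverse>" using u z(1) W by auto
      with z(2) u show False by blast
    qed
  qed
qed

lemma sum_Pow_insert:
  assumes "finite A" "a \<notin> A"
  shows "(\<Sum>X\<in>Pow (insert a A). g X) = (\<Sum>X\<in>Pow A. g X + g (insert a X))"
proof -
  have "(\<Sum>X\<in>Pow (insert a A). g X) = (\<Sum>X\<in>Pow A. g X) + (\<Sum>X\<in>insert a ` Pow A. g X)"
    unfolding Pow_insert by (rule sum.union_disjoint) (use assms in auto)
  also have "(\<Sum>X\<in>insert a ` Pow A. g X) = (\<Sum>X\<in>Pow A. g (insert a X))"
    by (rule sum.reindex_cong[where l="insert a"]) (use assms in \<open>auto simp: inj_on_def\<close>)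
  finally show ?thesis by (simp add: sum.distrib)
qed

lemma standardized_bernoulli_orthonormal:
  fixes m :: real
  assumes "0 < m" "m < 1"
  defines "s \<equiv> sqrt (m * (1 - m))"
  shows "(1 - m) * (if P then - m / s else 1) * (if Q then - m / s else 1)
       + m * (if P then (1 - m) / s else 1) * (if Q then (1 - m) / s else 1)
       = (if P = Q then 1 else 0)"
proof -
  have "s * s = m * (1 - m)" "s \<noteq> 0" using assms by simp_all
  then have mean: "(1 - m) * (- m / s) + m * ((1 - m) / s) = 0"
    and var: "(1 - m) * (- m / s) * (- m / s) + m * ((1 - m) / s) * ((1 - m) / s) = 1"
    by (simp_all add: field_simps)
  show ?thesis using mean var by (cases P; cases Q) (simp_all add: mult.commute)
qed

text \<open>The BN factorisation restricted to an arbitrary vertex set \<open>W\<close>, parents outside \<open>W\<close> being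
  read as 0. It is again a BN, on \<open>W\<close>, which is what lets the orthonormality proof remove one
  sink at a time.\<close>
definition bn_pmf_on :: "(nat \<Rightarrow> nat set) \<Rightarrow> (nat \<Rightarrow> nat set \<Rightarrow> real) \<Rightarrow> nat set \<Rightarrow> nat set \<Rightarrow> real" where
  "bn_pmf_on pa mu W x = (\<Prod>v\<in>W. if v \<in> x then mu v (x \<inter> pa v) else 1 - mu v (x \<inter> pa v))"

lemma bn_pmf_on_remove_sink:
  assumes "finite W" "v \<in> W" "\<forall>u\<in>W. v \<notin> pa u" "z - {v} = y - {v}"
  shows "bn_pmf_on pa mu W z
    = (if v \<in> z then mu v (y \<inter> pa v) else 1 - mu v (y \<inter> pa v)) * bn_pmf_on pa mu (W - {v}) y"
proof -
  have local: "z \<inter> pa u = y \<inter> pa u" if "u \<in> W" for u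
    using assms that by blast
  have membership: "u \<in> z \<longleftrightarrow> u \<in> y" if "u \<in> W - {v}" for u
    using assms(4) that by blast
  have "bn_pmf_on pa mu W z
      = (if v \<in> z then mu v (z \<inter> pa v) else 1 - mu v (z \<inter> pa v)) * bn_pmf_on pa mu (W - {v}) z"
    unfolding bn_pmf_on_def using assms(1,2) by (simp add: prod.remove)
  also have "bn_pmf_on pa mu (W - {v}) z = bn_pmf_on pa mu (W - {v}) y"
    unfolding bn_pmf_on_def using local membership
    by (intro prod.cong) auto
  finally show ?thesis using local[OF assms(2)] by simp
qed

lemma bn_phi_remove_sink:
  assumes "finite S" "\<forall>u\<in>S. v \<notin> pa u" "z - {v} = y - {v}"
  shows "bn_phi pa mu S z = (if v \<in> S then bn_phi1 pa mu v z else 1) * bn_phi pa mu (S - {v}) y"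
proof -
  have "bn_phi1 pa mu u z = bn_phi1 pa mu u y" if "u \<in> S - {v}" for u
  proof -
    have "z \<inter> pa u = y \<inter> pa u" "u \<in> z \<longleftrightarrow> u \<in> y" using assms that by blast+
    then show ?thesis unfolding bn_phi1_def by simp
  qed
  then have "bn_phi pa mu (S - {v}) z = bn_phi pa mu (S - {v}) y"
    unfolding bn_phi_def by (rule prod.cong[OF refl])
  moreover have "bn_phi pa mu S z = (if v \<in> S then bn_phi1 pa mu v z else 1) * bn_phi pa mu (S - {v}) z"
    unfolding bn_phi_def using assms(1) by (cases "v \<in> S") (simp_all add: prod.remove)
  ultimately show ?thesis by simp
qed

lemma bn_pair_sum_remove_sink:
  assumes W: "finite W" "v \<in> W" "\<forall>u\<in>W. v \<notin> pa u" and ST: "S \<subseteq> W" "T \<subseteq> W"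
    and y: "y \<subseteq> W - {v}" and mu_v: "\<forall>c\<subseteq>pa v. 0 < mu v c \<and> mu v c < 1"
  shows "bn_pmf_on pa mu W y * (bn_phi pa mu S y * bn_phi pa mu T y)
       + bn_pmf_on pa mu W (insert v y) * (bn_phi pa mu S (insert v y) * bn_phi pa mu T (insert v y))
       = (if (v \<in> S) = (v \<in> T) then 1 else 0)
         * (bn_pmf_on pa mu (W - {v}) y * (bn_phi pa mu (S - {v}) y * bn_phi pa mu (T - {v}) y))"
proof -
  define m where "m = mu v (y \<inter> pa v)"
  define s where "s = sqrt (m * (1 - m))"
  define P where "P = bn_pmf_on pa mu (W - {v}) y"
  define A where "A = bn_phi pa mu (S - {v}) y"
  define B where "B = bn_phi pa mu (T - {v}) y"
  have m: "0 < m" "m < 1" using mu_v unfolding m_def by auto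
  have v_notin: "v \<notin> y" using y by blast
  have "insert v y \<inter> pa v = y \<inter> pa v" using W by blast
  then have phi1: "bn_phi1 pa mu v y = - m / s" "bn_phi1 pa mu v (insert v y) = (1 - m) / s"
    using v_notin unfolding bn_phi1_def m_def s_def by simp_all
  have fin: "finite S" "finite T" using ST W(1) finite_subset by blast+
  have sink: "\<forall>u\<in>S. v \<notin> pa u" "\<forall>u\<in>T. v \<notin> pa u" using ST W(3) by blast+
  have drop: "insert v y - {v} = y - {v}" by simp
  have pmf: "bn_pmf_on pa mu W y = (1 - m) * P" "bn_pmf_on pa mu W (insert v y) = m * P"
    using bn_pmf_on_remove_sink[OF W refl] bn_pmf_on_remove_sink[OF W drop] v_notin
    unfolding m_def P_def by simp_all
  have phiS: "bn_phi pa mu S z = (if v \<in> S then bn_phi1 pa mu v z else 1) * A"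
    and phiT: "bn_phi pa mu T z = (if v \<in> T then bn_phi1 pa mu v z else 1) * B"
    if "z - {v} = y - {v}" for z
    unfolding A_def B_def using bn_phi_remove_sink[OF fin(1) sink(1) that]
      bn_phi_remove_sink[OF fin(2) sink(2) that] by simp_all
  have factor: "\<And>a0 a1 b0 b1 :: real. (1 - m) * P * (a0 * A * (b0 * B)) + m * P * (a1 * A * (b1 * B))
      = ((1 - m) * a0 * b0 + m * a1 * b1) * (P * (A * B))"
    by (simp add: algebra_simps)
  show ?thesis
    unfolding pmf phiS[OF refl] phiS[OF drop] phiT[OF refl] phiT[OF drop] phi1 factor
    using standardized_bernoulli_orthonormal[OF m, of "v \<in> S" "v \<in> T"]
    unfolding s_def[symmetric] P_def A_def B_def by (simp only:)
qed

lemma bn_pmf_on_orthonormal: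
  assumes dag: "bn_dag n pa" and mu_pos: "\<forall>v<n. \<forall>c\<subseteq>pa v. 0 < mu v c \<and> mu v c < 1"
    and "W \<subseteq> {..<n}" "S \<subseteq> W" "T \<subseteq> W"
  shows "(\<Sum>x\<in>Pow W. bn_pmf_on pa mu W x * (bn_phi pa mu S x * bn_phi pa mu T x))
    = (if S = T then 1 else 0)"
  using assms(3-)
proof (induction "card W" arbitrary: W S T)
  case 0
  then have "W = {}" using finite_subset by fastforce
  with 0 show ?case by (simp add: bn_pmf_on_def bn_phi_def)
next
  case (Suc k)
  then have W: "finite W" "W \<noteq> {}" using finite_subset by fastforce+
  obtain v where v: "v \<in> W" "\<And>u. u \<in> W \<Longrightarrow> v \<notin> pa u"
    using bn_dag_sink_exists[OF dag Suc.prems(1) W(2)] by blast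
  define W' where "W' = W - {v}"
  have W': "W = insert v W'" "v \<notin> W'" "finite W'" "k = card W'" "W' \<subseteq> {..<n}"
    using v W Suc.hyps(2) Suc.prems(1) unfolding W'_def by auto
  have "(\<Sum>x\<in>Pow W. bn_pmf_on pa mu W x * (bn_phi pa mu S x * bn_phi pa mu T x))
      = (\<Sum>y\<in>Pow W'. (if (v \<in> S) = (v \<in> T) then 1 else 0)
          * (bn_pmf_on pa mu W' y * (bn_phi pa mu (S - {v}) y * bn_phi pa mu (T - {v}) y)))"
    unfolding sum_Pow_insert[OF W'(3,2), folded W'(1)] W'_def
    using v mu_pos Suc.prems(1)
    by (intro sum.cong refl bn_pair_sum_remove_sink[OF W(1) v(1) _ Suc.prems(2,3)]) auto
  also have "\<dots> = (if (v \<in> S) = (v \<in> T) then 1 else 0) * (if S - {v} = T - {v} then 1 else 0)"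
    using Suc.hyps(1)[OF W'(4,5)] Suc.prems(2,3) unfolding W'_def
    by (simp add: sum_distrib_left[symmetric] Diff_mono)
  also have "\<dots> = (if S = T then 1 else 0)" by auto
  finally show ?case .
qed

lemma bn_pmf_eq_bn_pmf_on: "bn_pmf n pa mu = bn_pmf_on pa mu {..<n}"
  by (rule ext) (simp add: bn_pmf_def bn_pmf_on_def)

lemma bn_phi_orthonormal:
  assumes "bn_dag n pa" "\<forall>v<n. \<forall>c\<subseteq>pa v. 0 < mu v c \<and> mu v c < 1"
    and "S \<subseteq> {..<n}" "T \<subseteq> {..<n}"
  shows "bn_expect n pa mu (\<lambda>x. bn_phi pa mu S x * bn_phi pa mu T x) = (if S = T then 1 else 0)"
  unfolding bn_expect_def bn_pmf_eq_bn_pmf_on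
  using bn_pmf_on_orthonormal[OF assms(1,2) order.refl assms(3,4)] .

lemma weighted_sq_error_orthonormal:
  fixes p f :: "'x \<Rightarrow> real" and c :: "'s \<Rightarrow> real" and \<phi> :: "'s \<Rightarrow> 'x \<Rightarrow> real"
  assumes fin: "finite A"
    and orth: "\<And>S T. S \<in> A \<Longrightarrow> T \<in> A \<Longrightarrow>
      (\<Sum>x\<in>X. p x * (\<phi> S x * \<phi> T x)) = (if S = T then 1 else 0)"
  defines "coeff S \<equiv> \<Sum>x\<in>X. p x * (f x * \<phi> S x)"
  shows "(\<Sum>x\<in>X. p x * (f x - (\<Sum>S\<in>A. c S * \<phi> S x))\<^sup>2)
    = (\<Sum>x\<in>X. p x * (f x)\<^sup>2) - (\<Sum>S\<in>A. (coeff S)\<^sup>2) + (\<Sum>S\<in>A. (c S - coeff S)\<^sup>2)"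
proof -
  have sq: "(f x - (\<Sum>S\<in>A. c S * \<phi> S x))\<^sup>2 = (f x)\<^sup>2 - 2 * (\<Sum>S\<in>A. c S * (f x * \<phi> S x))
      + (\<Sum>S\<in>A. \<Sum>T\<in>A. c S * c T * (\<phi> S x * \<phi> T x))" for x
    by (simp add: power2_eq_square algebra_simps sum_distrib_left sum_distrib_right sum_product)
  have "(\<Sum>x\<in>X. p x * (f x - (\<Sum>S\<in>A. c S * \<phi> S x))\<^sup>2)
     = (\<Sum>x\<in>X. p x * (f x)\<^sup>2) - 2 * (\<Sum>x\<in>X. \<Sum>S\<in>A. c S * (p x * (f x * \<phi> S x)))
       + (\<Sum>x\<in>X. \<Sum>S\<in>A. \<Sum>T\<in>A. c S * c T * (p x * (\<phi> S x * \<phi> T x)))"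
    unfolding sq by (simp add: algebra_simps sum.distrib sum_subtractf sum_distrib_left)
  also have "(\<Sum>x\<in>X. \<Sum>S\<in>A. c S * (p x * (f x * \<phi> S x))) = (\<Sum>S\<in>A. c S * coeff S)"
    unfolding coeff_def by (subst sum.swap) (simp add: sum_distrib_left)
  also have "(\<Sum>x\<in>X. \<Sum>S\<in>A. \<Sum>T\<in>A. c S * c T * (p x * (\<phi> S x * \<phi> T x)))
      = (\<Sum>S\<in>A. \<Sum>T\<in>A. c S * c T * (\<Sum>x\<in>X. p x * (\<phi> S x * \<phi> T x)))"
    by (subst sum.swap, rule sum.cong[OF refl], subst sum.swap) (simp add: sum_distrib_left)
  also have "\<dots> = (\<Sum>S\<in>A. \<Sum>T\<in>A. c S * c T * (if S = T then 1 else 0))"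
    using orth by simp
  also have "\<dots> = (\<Sum>S\<in>A. (c S)\<^sup>2)"
    by (rule sum.cong[OF refl]) (simp add: fin power2_eq_square if_distrib sum.delta cong: if_cong)
  finally show ?thesis
    by (simp add: power2_eq_square algebra_simps sum.distrib sum_subtractf sum_distrib_left)
qed

lemma bn_sq_error:
  assumes "bn_dag n pa" "\<forall>v<n. \<forall>c\<subseteq>pa v. 0 < mu v c \<and> mu v c < 1"
    and "finite A" "A \<subseteq> Pow {..<n}"
  shows "bn_expect n pa mu (\<lambda>x. (f x - (\<Sum>S\<in>A. c S * bn_phi pa mu S x))\<^sup>2)
    = bn_expect n pa mu (\<lambda>x. (f x)\<^sup>2) - (\<Sum>S\<in>A. (bn_coeff n pa mu f S)\<^sup>2)
      + (\<Sum>S\<in>A. (c S - bn_coeff n pa mu f S)\<^sup>2)"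
  unfolding bn_coeff_def bn_expect_def
proof (rule weighted_sq_error_orthonormal[OF assms(3)])
  fix S T assume "S \<in> A" "T \<in> A"
  then show "(\<Sum>x\<in>Pow {..<n}. bn_pmf n pa mu x * (bn_phi pa mu S x * bn_phi pa mu T x))
      = (if S = T then 1 else 0)"
    using bn_phi_orthonormal[OF assms(1,2)] assms(4) unfolding bn_expect_def by blast
qed

lemma sum_sq_le_heavy_plus_tail:
  fixes a :: "'s \<Rightarrow> real"
  assumes "finite A" "finite B" "0 \<le> t" "\<And>S. S \<in> A - B \<Longrightarrow> \<bar>a S\<bar> < sqrt t"
  shows "(\<Sum>S\<in>A. (a S)\<^sup>2) \<le> (\<Sum>S\<in>B. (a S)\<^sup>2) + real (card A) * t"
proof -
  have "(\<Sum>S\<in>A - B. (a S)\<^sup>2) \<le> real (card (A - B)) * t"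
  proof (rule sum_bounded_above)
    fix S assume "S \<in> A - B"
    then have "\<bar>a S\<bar>\<^sup>2 \<le> (sqrt t)\<^sup>2" using assms(4) by (intro power_mono) (auto simp: less_imp_le)
    then show "(a S)\<^sup>2 \<le> t" using assms(3) by simp
  qed
  also have "\<dots> \<le> real (card A) * t"
    using assms(1,3) by (intro mult_right_mono) (auto intro: card_mono)
  finally have "(\<Sum>S\<in>A - B. (a S)\<^sup>2) \<le> real (card A) * t" .
  moreover have "(\<Sum>S\<in>A \<inter> B. (a S)\<^sup>2) \<le> (\<Sum>S\<in>B. (a S)\<^sup>2)"
    using assms(2) by (intro sum_mono2) auto
  ultimately show ?thesis using sum.Int_Diff[OF assms(1), of _ B] by (metis add_mono)
qed

lemma sum_sq_deviation_le:
  fixes a b :: "'s \<Rightarrow> real" and T eps gamma :: real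
  assumes "\<forall>S\<in>A. \<bar>b S - a S\<bar> \<le> gamma" "real (card A) \<le> 4 * T / eps" "gamma \<le> eps\<^sup>2 / (4 * T)"
    and "0 < eps" "eps \<le> 1" "1 \<le> T"
  shows "(\<Sum>S\<in>A. (b S - a S)\<^sup>2) \<le> eps"
proof (cases "A = {}")
  case False
  then have gamma: "0 \<le> gamma" using assms(1) by force
  have "(\<Sum>S\<in>A. (b S - a S)\<^sup>2) \<le> real (card A) * gamma\<^sup>2"
  proof (rule sum_bounded_above)
    fix S assume "S \<in> A"
    then have "\<bar>b S - a S\<bar>\<^sup>2 \<le> gamma\<^sup>2" using assms(1) by (intro power_mono) auto
    then show "(b S - a S)\<^sup>2 \<le> gamma\<^sup>2" by simp
  qed
  also have "\<dots> \<le> (4 * T / eps) * (eps\<^sup>2 / (4 * T))\<^sup>2"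
    using assms(2,3) gamma by (intro mult_mono power_mono) auto
  also have "\<dots> = eps * (eps\<^sup>2 / (4 * T))"
    using assms(4,6) by (simp add: power2_eq_square field_simps)
  also have "\<dots> \<le> eps"
  proof (rule mult_left_le)
    have "eps\<^sup>2 \<le> 4 * T" using assms(4-6) power_le_one[of eps 2] by linarith
    then show "eps\<^sup>2 / (4 * T) \<le> 1" using assms(6) by simp
  qed (use assms(4) in simp)
  finally show ?thesis .
qed (use assms(4) in simp)

lemma sgn_mismatch_imp_sq_error_ge_one:
  fixes y h :: real
  assumes "y \<in> {-1, 1}" "y \<noteq> sgn h"
  shows "1 \<le> (y - h)\<^sup>2"
proof -
  have "1 \<le> \<bar>y - h\<bar>" using assms by (cases h "0::real" rule: linorder_cases) auto
  then show ?thesis by (metis abs_ge_self le_less_trans one_le_power power2_abs not_less)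
qed

lemma bn_pmf_nonneg:
  assumes "\<forall>v<n. \<forall>c\<subseteq>pa v. 0 < mu v c \<and> mu v c < 1"
  shows "0 \<le> bn_pmf n pa mu x"
  unfolding bn_pmf_def using assms by (intro prod_nonneg) (simp add: less_imp_le)

lemma bn_prob_le_bn_expect:
  assumes "\<forall>v<n. \<forall>c\<subseteq>pa v. 0 < mu v c \<and> mu v c < 1"
    and "\<And>x. x \<in> Pow {..<n} \<Longrightarrow> E x \<Longrightarrow> 1 \<le> F x" "\<And>x. 0 \<le> F x"
  shows "bn_prob n pa mu E \<le> bn_expect n pa mu F"
proof -
  have "bn_prob n pa mu E \<le> (\<Sum>x\<in>{x\<in>Pow {..<n}. E x}. bn_pmf n pa mu x * F x)"
    unfolding bn_prob_def using assms bn_pmf_nonneg[OF assms(1)]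
    by (intro sum_mono) (metis mem_Collect_eq mult_left_mono mult.right_neutral)
  also have "\<dots> \<le> bn_expect n pa mu F"
    unfolding bn_expect_def using assms(3) bn_pmf_nonneg[OF assms(1)]
    by (intro sum_mono2) auto
  finally show ?thesis .
qed

theorem mainTheorem16:
  fixes n :: nat and pa :: "nat \<Rightarrow> nat set" and mu :: "nat \<Rightarrow> nat set \<Rightarrow> real"
    and f :: "nat set \<Rightarrow> real" and eps gamma :: real and T :: nat
    and \<T> :: "nat set set" and gc :: "nat set \<Rightarrow> real"
    and Sstar :: "nat set set" and ft :: "nat set \<Rightarrow> real"
  assumes dag: "bn_dag n pa"
    and mu_pos: "\<forall>v<n. \<forall>c\<subseteq>pa v. 0 < mu v c \<and> mu v c < 1"
    and f_pm1: "\<forall>x\<in>Pow {..<n}. f x \<in> {-1, 1}"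
    and eps: "0 < eps" "eps \<le> 1"
    and T: "1 \<le> T"
    and TT: "\<T> \<subseteq> Pow {..<n}" "card \<T> = T"
    and approx: "bn_expect n pa mu (\<lambda>x. (f x - (\<Sum>S\<in>\<T>. gc S * bn_phi pa mu S x))\<^sup>2) \<le> eps"
    and Sstar: "{S\<in>Pow {..<n}. \<bar>bn_coeff n pa mu f S\<bar> \<ge> sqrt (eps / T)} \<subseteq> Sstar"
      "Sstar \<subseteq> Pow {..<n}" "real (card Sstar) \<le> 4 * T / eps"
    and ft: "\<forall>S\<in>Sstar. \<bar>ft S - bn_coeff n pa mu f S\<bar> \<le> gamma"
    and gamma: "gamma \<le> eps\<^sup>2 / (4 * T)"
  shows
    "let \<S> = {S\<in>Pow {..<n}. \<bar>bn_coeff n pa mu f S\<bar> \<ge> sqrt (eps / T)};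
         h1 = (\<lambda>x. \<Sum>S\<in>\<S>. bn_coeff n pa mu f S * bn_phi pa mu S x);
         h2 = (\<lambda>x. \<Sum>S\<in>\<S>. ft S * bn_phi pa mu S x);
         h3 = (\<lambda>x. \<Sum>S\<in>Sstar. ft S * bn_phi pa mu S x)
     in bn_expect n pa mu (\<lambda>x. (f x - h1 x)\<^sup>2) \<le> 2 * eps
      \<and> bn_expect n pa mu (\<lambda>x. (f x - h2 x)\<^sup>2) \<le> 3 * eps
      \<and> bn_prob n pa mu (\<lambda>x. f x \<noteq> sgn (h3 x)) \<le> bn_expect n pa mu (\<lambda>x. (f x - h3 x)\<^sup>2)
      \<and> bn_expect n pa mu (\<lambda>x. (f x - h3 x)\<^sup>2) \<le> 3 * eps"
proof -
  define c where "c = bn_coeff n pa mu f"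
  define \<S> where "\<S> = {S\<in>Pow {..<n}. \<bar>c S\<bar> \<ge> sqrt (eps / T)}"
  define residual where "residual A = bn_expect n pa mu (\<lambda>x. (f x)\<^sup>2) - (\<Sum>S\<in>A. (c S)\<^sup>2)" for A
  have fin: "finite \<T>" "finite Sstar" "finite \<S>"
    using TT(1) Sstar(2) finite_subset unfolding \<S>_def by fastforce+
  have \<S>: "\<S> \<subseteq> Sstar" "\<S> \<subseteq> Pow {..<n}" using Sstar(1) unfolding \<S>_def c_def by auto
  note sq_error = bn_sq_error[OF dag mu_pos, of _ f, folded c_def]
  have "0 \<le> (\<Sum>S\<in>\<T>. (gc S - c S)\<^sup>2)" by (simp add: sum_nonneg)
  then have "residual \<T> \<le> eps"
    using approx sq_error[OF fin(1) TT(1), of gc] unfolding residual_def by linarith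
  moreover have "(\<Sum>S\<in>\<T>. (c S)\<^sup>2) \<le> (\<Sum>S\<in>\<S>. (c S)\<^sup>2) + real (card \<T>) * (eps / T)"
    using TT(1) eps(1) by (intro sum_sq_le_heavy_plus_tail fin) (auto simp: \<S>_def c_def)
  ultimately have "residual \<S> \<le> 2 * eps" using TT(2) T unfolding residual_def by simp
  moreover have "residual Sstar \<le> residual \<S>"
    unfolding residual_def using fin(2) \<S>(1) by (simp add: sum_mono2)
  moreover have "(\<Sum>S\<in>Sstar. (ft S - c S)\<^sup>2) \<le> eps"
    using ft Sstar(3) gamma eps T unfolding c_def by (intro sum_sq_deviation_le) auto
  moreover have "(\<Sum>S\<in>\<S>. (ft S - c S)\<^sup>2) \<le> (\<Sum>S\<in>Sstar. (ft S - c S)\<^sup>2)"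
    using fin(2) \<S>(1) by (simp add: sum_mono2)
  moreover have "bn_prob n pa mu (\<lambda>x. f x \<noteq> sgn (\<Sum>S\<in>Sstar. ft S * bn_phi pa mu S x))
      \<le> bn_expect n pa mu (\<lambda>x. (f x - (\<Sum>S\<in>Sstar. ft S * bn_phi pa mu S x))\<^sup>2)"
    using f_pm1 by (intro bn_prob_le_bn_expect mu_pos sgn_mismatch_imp_sq_error_ge_one) auto
  ultimately show ?thesis
    unfolding Let_def c_def[symmetric] \<S>_def[symmetric] residual_def
    using sq_error[OF fin(3) \<S>(2)] sq_error[OF fin(2) Sstar(2)] by simp
qed

end
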